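(* Let $k$ be a non-archimedean local field of characteristic different from $2$, let $G=\mathrm{GSp}(4,k)$, and let $P$, $Q$, $H$, $\mathbf{s}_2$ be as in the context. Then $G=QH$, and there is a disjoint double coset decomposition $G=PH\sqcup P\mathbf{s}_2H$.
   Context: $G=\mathrm{GSp}(4,k)=\{g\in \mathrm{GL}(4,k)\mid g^tJg=\lambda_G(g)J\}$ with $J=\begin{pmatrix}0&E_2\\-E_2&0\end{pmatrix}$ and similitude factor $\lambda_G(g)\in k^\times$. Let $e_1,e_2,e_1^*,e_2^*$ be the standard basis of $k^4$ and $L_0=ke_1\oplus ke_2$. $P$ is the Siegel parabolic subgroup (the stabilizer of $L_0$ in $G$) and $Q$ is the Klingen parabolic subgroup (the stabilizer of the line $ke_1$ in $G$). $\mathbf{s}_2=\begin{pmatrix}1&0&0&0\\0&0&0&1\\0&0&1&0\\0&-1&0&0\end{pmatrix}$. Fix a non-square $\alpha\in k^\times$, $K=k(\sqrt{\alpha})$, and write $a=a_1+a_2\sqrt\alpha$ ($a_1,a_2\in k$) for $a\in K$. Let $H=\{g\in\mathrm{GL}(2,K)\mid \det g\in k^\times\}$, identified with a subgroup of $G$ via the embedding $\begin{pmatrix}a&b\\c&d\end{pmatrix}\mapsto \begin{pmatrix} a_1&a_2\alpha&b_1&b_2\\ a_2&a_1&b_2&b_1/\alpha\\ c_1&c_2\alpha&d_1&d_2\\ c_2\alpha&c_1\alpha&d_2\alpha&d_1\end{pmatrix}.$ *)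

theory Defs
  imports "Jordan_Normal_Form.Determinant"
begin

definition nonarch_local_field_abs :: "('a::field \<Rightarrow> real) \<Rightarrow> bool" where
  "nonarch_local_field_abs v \<longleftrightarrow>
     (\<forall>x. v x \<ge> 0) \<and> (\<forall>x. v x = 0 \<longleftrightarrow> x = 0) \<and>
     (\<forall>x y. v (x * y) = v x * v y) \<and>
     (\<forall>x y. v (x + y) \<le> max (v x) (v y)) \<and>
     (\<exists>x. x \<noteq> 0 \<and> v x \<noteq> 1) \<and>
     (\<exists>c::real. 0 < c \<and> c < 1 \<and> (\<forall>x. x \<noteq> 0 \<longrightarrow> (\<exists>n::int. v x = c powi n))) \<and>
     (\<forall>s::nat \<Rightarrow> 'a. (\<forall>e>0. \<exists>N. \<forall>m\<ge>N. \<forall>n\<ge>N. v (s m - s n) < e) \<longrightarrow>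
                      (\<exists>l. \<forall>e>0. \<exists>N. \<forall>n\<ge>N. v (s n - l) < e)) \<and>
     finite ({x. v x \<le> 1} // {(x, y). v x \<le> 1 \<and> v y \<le> 1 \<and> v (x - y) < 1})"

definition nonarch_local_field :: "'a::field itself \<Rightarrow> bool" where
  "nonarch_local_field _ \<longleftrightarrow> (\<exists>v::'a \<Rightarrow> real. nonarch_local_field_abs v)"

definition Jmat :: "'a::field mat" where
  "Jmat = mat_of_rows_list 4 [[0,0,1,0],[0,0,0,1],[-1,0,0,0],[0,-1,0,0]]"

definition GSp4 :: "'a::field mat set" where
  "GSp4 = {g \<in> carrier_mat 4 4. det g \<noteq> 0 \<and>
             (\<exists>lam. lam \<noteq> 0 \<and> transpose_mat g * Jmat * g = lam \<cdot>\<^sub>m Jmat)}"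

definition L0 :: "'a::field vec set" where
  "L0 = {v \<in> carrier_vec 4. v $ 2 = 0 \<and> v $ 3 = 0}"

definition line_e1 :: "'a::field vec set" where
  "line_e1 = {c \<cdot>\<^sub>v unit_vec 4 0 | c. True}"

definition SiegelP :: "'a::field mat set" where
  "SiegelP = {g \<in> GSp4. (\<lambda>v. g *\<^sub>v v) ` L0 = L0}"

definition KlingenQ :: "'a::field mat set" where
  "KlingenQ = {g \<in> GSp4. (\<lambda>v. g *\<^sub>v v) ` line_e1 = line_e1}"

definition s2 :: "'a::field mat" where
  "s2 = mat_of_rows_list 4 [[1,0,0,0],[0,0,0,1],[0,0,1,0],[0,-1,0,0]]"

(* Elements of K = k(sqrt alpha) represented as pairs (a1,a2) = a1 + a2 sqrt alpha *)
definition Kmul :: "'a::field \<Rightarrow> 'a \<times> 'a \<Rightarrow> 'a \<times> 'a \<Rightarrow> 'a \<times> 'a" where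
  "Kmul \<alpha> x y = (fst x * fst y + \<alpha> * snd x * snd y, fst x * snd y + snd x * fst y)"

definition Kdet :: "'a::field \<Rightarrow> 'a \<times> 'a \<Rightarrow> 'a \<times> 'a \<Rightarrow> 'a \<times> 'a \<Rightarrow> 'a \<times> 'a \<Rightarrow> 'a \<times> 'a" where
  "Kdet \<alpha> a b c d = (fst (Kmul \<alpha> a d) - fst (Kmul \<alpha> b c), snd (Kmul \<alpha> a d) - snd (Kmul \<alpha> b c))"

(* the embedding of GL(2,K) into GL(4,k) *)
definition embH :: "'a::field \<Rightarrow> 'a \<times> 'a \<Rightarrow> 'a \<times> 'a \<Rightarrow> 'a \<times> 'a \<Rightarrow> 'a \<times> 'a \<Rightarrow> 'a mat" where
  "embH \<alpha> a b c d = mat_of_rows_list 4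
     [[fst a, snd a * \<alpha>, fst b, snd b],
      [snd a, fst a, snd b, fst b / \<alpha>],
      [fst c, snd c * \<alpha>, fst d, snd d],
      [snd c * \<alpha>, fst c * \<alpha>, snd d * \<alpha>, fst d]]"

(* H = {g in GL(2,K) | det g in k^x}, embedded in G *)
definition Hgrp :: "'a::field \<Rightarrow> 'a mat set" where
  "Hgrp \<alpha> = {embH \<alpha> a b c d | a b c d.
               snd (Kdet \<alpha> a b c d) = 0 \<and> fst (Kdet \<alpha> a b c d) \<noteq> 0}"

definition setmult :: "'a::field mat set \<Rightarrow> 'a mat set \<Rightarrow> 'a mat set" where
  "setmult A B = {x * y | x y. x \<in> A \<and> y \<in> B}"

end

theory Submission
  imports Defs
begin

text \<open>Identify \<open>k\<^sup>4\<close> with \<open>K\<^sup>2\<close>, so that \<open>H\<close> acts \<open>K\<close>-linearly. As the norm form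
  \<open>x\<^sup>2 - \<alpha> y\<^sup>2\<close> is anisotropic, every nonzero vector of \<open>K\<^sup>2\<close> is the first column of some
  \<open>h \<in> H\<close>. For \<open>g \<in> G\<close> take \<open>h\<close> with first column \<open>g\<^sup>-\<^sup>1 e\<^sub>1\<close>: then \<open>gh\<close> fixes \<open>e\<^sub>1\<close>,
  so \<open>gh \<in> Q\<close> and \<open>G = QH\<close>.

  For the Siegel parabolic, a Pluecker-type coordinate \<open>D(x)\<close> of the last two rows of \<open>x\<close>
  satisfies \<open>D(pxh) = c(p) det(h) D(x)\<close> with \<open>c(p) \<noteq> 0\<close> for \<open>p \<in> P\<close>; it vanishes on \<open>P\<close> and
  \<open>D(s\<^sub>2) = 1\<close>, so \<open>PH\<close> and \<open>P s\<^sub>2 H\<close> are disjoint. Conversely, up to the square of the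
  multiplier of \<open>g\<close>, \<open>D(g)\<close> is the \<open>k\<close>-part of a \<open>K\<close>-determinant formed from the first two
  columns of \<open>g\<^sup>-\<^sup>1\<close>, which span \<open>g\<^sup>-\<^sup>1 L\<^sub>0\<close>. If \<open>D(g) = 0\<close> this plane is a \<open>K\<close>-line and the
  \<open>h\<close> above already gives \<open>gh \<in> P\<close>; otherwise those two columns, rearranged by \<open>s\<^sub>2\<close>, are
  columns of some \<open>h \<in> H\<close> and \<open>gh \<in> P s\<^sub>2\<close>.\<close>

section \<open>Explicit 4 by 4 matrices\<close>

lemma mat4_mult_index:
  fixes A B :: "'a::comm_ring_1 mat"
  assumes "A \<in> carrier_mat n 4" "B \<in> carrier_mat 4 m" "i < n" "j < m"
  shows "(A * B) $$ (i,j) =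
    A$$(i,0) * B$$(0,j) + A$$(i,1) * B$$(1,j) + A$$(i,2) * B$$(2,j) + A$$(i,3) * B$$(3,j)"
  using assms by (simp add: scalar_prod_def numeral_eq_Suc)

lemma mat4_mult_vec_index:
  fixes A :: "'a::comm_ring_1 mat"
  assumes "A \<in> carrier_mat n 4" "v \<in> carrier_vec 4" "i < n"
  shows "(A *\<^sub>v v) $ i = A$$(i,0) * v$0 + A$$(i,1) * v$1 + A$$(i,2) * v$2 + A$$(i,3) * v$3"
  using assms by (simp add: scalar_prod_def numeral_eq_Suc)

lemma mat4_eqI:
  assumes "A \<in> carrier_mat 4 4" "B \<in> carrier_mat 4 4"
    and "\<And>i j. i \<in> {0,1,2,3} \<Longrightarrow> j \<in> {0,1,2,3} \<Longrightarrow> A$$(i,j) = B$$(i,j)"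
  shows "A = B"
proof (rule eq_matI)
  fix i j assume "i < dim_row B" "j < dim_col B"
  then have "i \<in> {0,1,2,3}" "j \<in> {0,1,2,3}" using assms(2) by auto
  then show "A$$(i,j) = B$$(i,j)" by (rule assms(3))
qed (use assms(1,2) in auto)

lemma vec4_eqI:
  assumes "dim_vec v = 4" "dim_vec w = 4" "\<And>i. i \<in> {0,1,2,3} \<Longrightarrow> v $ i = w $ i"
  shows "v = w"
proof (rule eq_vecI)
  fix i assume "i < dim_vec w"
  then have "i \<in> {0,1,2,3}" using assms(2) by auto
  then show "v $ i = w $ i" by (rule assms(3))
qed (use assms in simp)

lemma mult_unit_vec_eq_col:
  fixes A :: "'a::semiring_1 mat"
  assumes "A \<in> carrier_mat n m" "j < m"
  shows "A *\<^sub>v unit_vec m j = col A j"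
  using assms by (intro eq_vecI) auto

lemma det_nonzero_right_inverse:
  fixes A :: "'a::field mat"
  assumes "A \<in> carrier_mat n n" "det A \<noteq> 0"
  obtains B where "B \<in> carrier_mat n n" "A * B = 1\<^sub>m n"
  using det_non_zero_imp_unit[OF assms, of undefined] that
  unfolding Units_def ring_mat_simps by auto

lemma right_inverse_imp_det_nonzero:
  fixes A :: "'a::field mat"
  assumes "A \<in> carrier_mat n n" "B \<in> carrier_mat n n" "A * B = 1\<^sub>m n"
  shows "det A \<noteq> 0"
  using det_mult[OF assms(1,2)] assms(3) by auto

lemma mat_of_rows_list_carrier: "mat_of_rows_list n rs \<in> carrier_mat (length rs) n"
  by (simp add: mat_of_rows_list_def)

lemma mat_of_rows_list_dims[simp]:
  "dim_row (mat_of_rows_list n rs) = length rs" "dim_col (mat_of_rows_list n rs) = n"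
  by (simp_all add: mat_of_rows_list_def)

lemma mat_of_rows_list_index:
  "i < length rs \<Longrightarrow> j < n \<Longrightarrow> mat_of_rows_list n rs $$ (i,j) = rs ! i ! j"
  by (simp add: mat_of_rows_list_def)

lemma Jmat_carrier[simp]: "Jmat \<in> carrier_mat 4 4"
  unfolding Jmat_def using mat_of_rows_list_carrier by fastforce

lemma Jmat_dims[simp]: "dim_row (Jmat::'a::field mat) = 4" "dim_col (Jmat::'a::field mat) = 4"
  using Jmat_carrier by blast+

lemma Jmat_index: "i < 4 \<Longrightarrow> j < 4 \<Longrightarrow> (Jmat::'a::field mat) $$ (i,j) =
    [[0,0,1,0],[0,0,0,1],[-1,0,0,0],[0,-1,0,0]] ! i ! j"
  unfolding Jmat_def by (simp add: mat_of_rows_list_index)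

lemma Jmat_mult_index:
  assumes "(g::'a::field mat) \<in> carrier_mat 4 4" "j < 4"
  shows "(Jmat * g) $$ (0,j) = g$$(2,j)" "(Jmat * g) $$ (1,j) = g$$(3,j)"
  using assms by (simp_all add: mat4_mult_index[OF Jmat_carrier] Jmat_index del: index_mult_mat)

lemma transpose_mult_Jmat_index:
  assumes "(g::'a::field mat) \<in> carrier_mat 4 4" "i < 4"
  shows "(transpose_mat g * Jmat) $$ (i,0) = - g$$(2,i)"
    "(transpose_mat g * Jmat) $$ (i,1) = - g$$(3,i)"
    "(transpose_mat g * Jmat) $$ (i,2) = g$$(0,i)"
    "(transpose_mat g * Jmat) $$ (i,3) = g$$(1,i)"
  using assms by (simp_all add: mat4_mult_index[OF _ Jmat_carrier] Jmat_index del: index_mult_mat)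

lemma symplectic_form_index:
  assumes g: "(g::'a::field mat) \<in> carrier_mat 4 4" and "i < 4" "j < 4"
  shows "(transpose_mat g * Jmat * g) $$ (i,j) =
     g$$(0,i) * g$$(2,j) + g$$(1,i) * g$$(3,j) - g$$(2,i) * g$$(0,j) - g$$(3,i) * g$$(1,j)"
proof -
  have gJ: "transpose_mat g * Jmat \<in> carrier_mat 4 4" using g by simp
  show ?thesis
    unfolding mat4_mult_index[OF gJ g assms(2,3)] transpose_mult_Jmat_index[OF g assms(2)]
    by (simp add: algebra_simps)
qed

section \<open>Symplectic similitudes\<close>

lemma GSp4_mult:
  assumes A: "A \<in> GSp4" and B: "B \<in> GSp4"
  shows "A * B \<in> GSp4"
proof -
  from A obtain l where Ac: "A \<in> carrier_mat 4 4" and dA: "det A \<noteq> 0" and l: "l \<noteq> 0"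
    and lA: "transpose_mat A * Jmat * A = l \<cdot>\<^sub>m Jmat" unfolding GSp4_def by auto
  from B obtain m where Bc: "B \<in> carrier_mat 4 4" and dB: "det B \<noteq> 0" and m: "m \<noteq> 0"
    and mB: "transpose_mat B * Jmat * B = m \<cdot>\<^sub>m Jmat" unfolding GSp4_def by auto
  have "transpose_mat (A * B) * Jmat * (A * B) = transpose_mat B * (transpose_mat A * Jmat * A) * B"
    using Ac Bc by (simp add: transpose_mult assoc_mult_mat[of _ 4 4 _ 4 _ 4] mult_carrier_mat[of _ 4 4])
  also have "\<dots> = l \<cdot>\<^sub>m (transpose_mat B * Jmat * B)"
    using Ac Bc by (simp add: lA mult_smult_distrib[of _ 4 4 _ 4] mult_smult_assoc_mat[of _ 4 4 _ 4])
  also have "\<dots> = (l * m) \<cdot>\<^sub>m Jmat"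
    by (auto simp: mB)
  finally show ?thesis
    using Ac Bc det_mult[OF Ac Bc] dA dB l m unfolding GSp4_def by (auto intro!: exI[of _ "l * m"])
qed

lemma GSp4E:
  assumes "(g::'a::field mat) \<in> GSp4"
  obtains l where "g \<in> carrier_mat 4 4" "det g \<noteq> 0" "l \<noteq> 0"
    "transpose_mat g * Jmat * g = l \<cdot>\<^sub>m Jmat"
    "\<And>i j. i < 4 \<Longrightarrow> j < 4 \<Longrightarrow>
       g$$(0,i) * g$$(2,j) + g$$(1,i) * g$$(3,j) - g$$(2,i) * g$$(0,j) - g$$(3,i) * g$$(1,j)
       = l * Jmat $$ (i,j)"
proof -
  from assms obtain l where g: "g \<in> carrier_mat 4 4" and "det g \<noteq> 0" "l \<noteq> 0"
    and e: "transpose_mat g * Jmat * g = l \<cdot>\<^sub>m Jmat" unfolding GSp4_def by auto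
  moreover have "g$$(0,i) * g$$(2,j) + g$$(1,i) * g$$(3,j) - g$$(2,i) * g$$(0,j) - g$$(3,i) * g$$(1,j)
       = l * Jmat $$ (i,j)" if "i < 4" "j < 4" for i j
    using arg_cong[OF e, of "\<lambda>M. M $$ (i,j)"] symplectic_form_index[OF g that] that by simp
  ultimately show ?thesis using that by blast
qed

lemma GSp4I:
  assumes g: "(g::'a::field mat) \<in> carrier_mat 4 4" and "h \<in> carrier_mat 4 4" "g * h = 1\<^sub>m 4"
    and "l \<noteq> 0"
    and e: "\<And>i j. i \<in> {0,1,2,3} \<Longrightarrow> j \<in> {0,1,2,3} \<Longrightarrow>
       g$$(0,i) * g$$(2,j) + g$$(1,i) * g$$(3,j) - g$$(2,i) * g$$(0,j) - g$$(3,i) * g$$(1,j)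
       = l * Jmat $$ (i,j)"
  shows "g \<in> GSp4"
proof -
  have "transpose_mat g * Jmat * g = l \<cdot>\<^sub>m Jmat"
  proof (rule mat4_eqI)
    fix i j :: nat assume ij: "i \<in> {0,1,2,3}" "j \<in> {0,1,2,3}"
    then have "i < 4" "j < 4" by auto
    then show "(transpose_mat g * Jmat * g) $$ (i,j) = (l \<cdot>\<^sub>m Jmat) $$ (i,j)"
      unfolding symplectic_form_index[OF g \<open>i < 4\<close> \<open>j < 4\<close>] e[OF ij] by simp
  qed (use g in \<open>simp_all add: mult_carrier_mat[of _ 4 4]\<close>)
  then show ?thesis
    unfolding GSp4_def using assms right_inverse_imp_det_nonzero by blast
qed

text \<open>The inverse of a symplectic similitude \<open>g\<close> with multiplier \<open>l\<close> is
  \<open>l\<^sup>-\<^sup>1 J\<^sup>-\<^sup>1 g\<^sup>T J\<close>; so the last two rows of \<open>g\<close> are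
  read off from the first two columns of \<open>g\<^sup>-\<^sup>1\<close>.\<close>
lemma GSp4_lower_rows_by_inverse:
  fixes g :: "'a::field mat"
  assumes g: "g \<in> carrier_mat 4 4" and m: "m \<in> carrier_mat 4 4" and gm: "g * m = 1\<^sub>m 4"
    and e: "transpose_mat g * Jmat * g = l \<cdot>\<^sub>m Jmat"
  shows "g$$(2,0) = - l * m$$(2,0)" "g$$(2,1) = - l * m$$(3,0)"
    "g$$(2,2) = l * m$$(0,0)" "g$$(2,3) = l * m$$(1,0)"
    "g$$(3,0) = - l * m$$(2,1)" "g$$(3,1) = - l * m$$(3,1)"
    "g$$(3,2) = l * m$$(0,1)" "g$$(3,3) = l * m$$(1,1)"
proof -
  have "transpose_mat m * transpose_mat g = 1\<^sub>m 4"
    using transpose_mult[OF g m] gm by simp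
  then have "Jmat * g = (transpose_mat m * transpose_mat g) * Jmat * g"
    using g by simp
  also have "\<dots> = transpose_mat m * (transpose_mat g * Jmat * g)"
    using g m by (simp add: assoc_mult_mat[of _ 4 4 _ 4 _ 4] mult_carrier_mat[of _ 4 4])
  also have "\<dots> = l \<cdot>\<^sub>m (transpose_mat m * Jmat)"
    using m by (simp add: e mult_smult_distrib[of _ 4 4 _ 4])
  finally have Jg: "Jmat * g = l \<cdot>\<^sub>m (transpose_mat m * Jmat)" .
  have mJ: "transpose_mat m * Jmat \<in> carrier_mat 4 4" using m by simp
  have "g$$(2,j) = l * (transpose_mat m * Jmat)$$(0,j)" "g$$(3,j) = l * (transpose_mat m * Jmat)$$(1,j)"
    if "j < 4" for j
    using arg_cong[OF Jg, of "\<lambda>M. M $$ (0,j)"] arg_cong[OF Jg, of "\<lambda>M. M $$ (1,j)"]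
      Jmat_mult_index[OF g that] that carrier_matD[OF mJ] by (auto simp del: index_mult_mat)
  then show
    "g$$(2,0) = - l * m$$(2,0)" "g$$(2,1) = - l * m$$(3,0)"
    "g$$(2,2) = l * m$$(0,0)" "g$$(2,3) = l * m$$(1,0)"
    "g$$(3,0) = - l * m$$(2,1)" "g$$(3,1) = - l * m$$(3,1)"
    "g$$(3,2) = l * m$$(0,1)" "g$$(3,3) = l * m$$(1,1)"
    using transpose_mult_Jmat_index[OF m, of 0] transpose_mult_Jmat_index[OF m, of 1]
    by (simp_all del: index_mult_mat)
qed

lemma setmult_subset_GSp4:
  assumes "A \<subseteq> GSp4" "B \<subseteq> GSp4"
  shows "setmult A B \<subseteq> GSp4"
  using assms GSp4_mult unfolding setmult_def by blast

section \<open>The subgroup H\<close>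

lemma embH_carrier[simp]: "embH \<alpha> a b c d \<in> carrier_mat 4 4"
  unfolding embH_def using mat_of_rows_list_carrier by fastforce

lemma embH_dims[simp]: "dim_row (embH \<alpha> a b c d) = 4" "dim_col (embH \<alpha> a b c d) = 4"
  using embH_carrier by blast+

lemma embH_index: "i < 4 \<Longrightarrow> j < 4 \<Longrightarrow> embH \<alpha> a b c d $$ (i,j) =
    [[fst a, snd a * \<alpha>, fst b, snd b],
     [snd a, fst a, snd b, fst b / \<alpha>],
     [fst c, snd c * \<alpha>, fst d, snd d],
     [snd c * \<alpha>, fst c * \<alpha>, snd d * \<alpha>, fst d]] ! i ! j"
  unfolding embH_def by (simp add: mat_of_rows_list_index)

lemma embH_symplectic_form:
  fixes \<alpha> :: "'a::field"
  assumes "\<alpha> \<noteq> 0"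
  shows "transpose_mat (embH \<alpha> a b c d) * Jmat * embH \<alpha> a b c d =
    mat_of_rows_list 4
      [[0, 0, fst (Kdet \<alpha> a b c d), snd (Kdet \<alpha> a b c d)],
       [0, 0, \<alpha> * snd (Kdet \<alpha> a b c d), fst (Kdet \<alpha> a b c d)],
       [- fst (Kdet \<alpha> a b c d), - (\<alpha> * snd (Kdet \<alpha> a b c d)), 0, 0],
       [- snd (Kdet \<alpha> a b c d), - fst (Kdet \<alpha> a b c d), 0, 0]]"
  by (rule mat4_eqI)
    (use assms mat_of_rows_list_carrier[of 4] in \<open>auto simp: symplectic_form_index embH_index
      mat_of_rows_list_index Kdet_def Kmul_def field_simps mult_carrier_mat[of _ 4 4]
      simp del: index_mult_mat\<close>)

lemma embH_symplectic:
  fixes \<alpha> :: "'a::field"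
  assumes "\<alpha> \<noteq> 0" "snd (Kdet \<alpha> a b c d) = 0"
  shows "transpose_mat (embH \<alpha> a b c d) * Jmat * embH \<alpha> a b c d = fst (Kdet \<alpha> a b c d) \<cdot>\<^sub>m Jmat"
  unfolding embH_symplectic_form[OF assms(1)] assms(2)
  by (rule mat4_eqI)
    (use mat_of_rows_list_carrier[of 4] in \<open>auto simp: mat_of_rows_list_index Jmat_index\<close>)

definition Kscale :: "'a::field \<Rightarrow> 'a \<times> 'a \<Rightarrow> 'a \<times> 'a" where
  "Kscale t x = (t * fst x, t * snd x)"

definition embH_inv :: "'a::field \<Rightarrow> 'a \<times> 'a \<Rightarrow> 'a \<times> 'a \<Rightarrow> 'a \<times> 'a \<Rightarrow> 'a \<times> 'a \<Rightarrow> 'a mat" where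
  "embH_inv \<alpha> a b c d = embH \<alpha>
     (Kscale (1 / fst (Kdet \<alpha> a b c d)) d) (Kscale (- (1 / fst (Kdet \<alpha> a b c d))) b)
     (Kscale (- (1 / fst (Kdet \<alpha> a b c d))) c) (Kscale (1 / fst (Kdet \<alpha> a b c d)) a)"

lemma embH_mult_adjugate:
  fixes \<alpha> :: "'a::field"
  assumes "\<alpha> \<noteq> 0"
  shows "embH \<alpha> a b c d * embH \<alpha> (Kscale t d) (Kscale (- t) b) (Kscale (- t) c) (Kscale t a) =
    t \<cdot>\<^sub>m mat_of_rows_list 4
      [[fst (Kdet \<alpha> a b c d), \<alpha> * snd (Kdet \<alpha> a b c d), 0, 0],
       [snd (Kdet \<alpha> a b c d), fst (Kdet \<alpha> a b c d), 0, 0],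
       [0, 0, fst (Kdet \<alpha> a b c d), snd (Kdet \<alpha> a b c d)],
       [0, 0, \<alpha> * snd (Kdet \<alpha> a b c d), fst (Kdet \<alpha> a b c d)]]"
  by (rule mat4_eqI)
    (use assms mat_of_rows_list_carrier[of 4] in
      \<open>auto simp: mat4_mult_index[OF embH_carrier embH_carrier] embH_index mat_of_rows_list_index Kscale_def Kdet_def Kmul_def field_simps mult_carrier_mat[of _ 4 4]
      simp del: index_mult_mat\<close>)

lemma embH_mult_inv:
  fixes \<alpha> :: "'a::field"
  assumes "\<alpha> \<noteq> 0" "snd (Kdet \<alpha> a b c d) = 0" "fst (Kdet \<alpha> a b c d) \<noteq> 0"
  shows "embH \<alpha> a b c d * embH_inv \<alpha> a b c d = 1\<^sub>m 4"
  unfolding embH_inv_def embH_mult_adjugate[OF assms(1)] assms(2)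
  by (rule mat4_eqI)
    (use assms(3) mat_of_rows_list_carrier[of 4] in \<open>auto simp: mat_of_rows_list_index\<close>)

lemma Kdet_adjugate:
  "Kdet \<alpha> (Kscale t d) (Kscale (- t) b) (Kscale (- t) c) (Kscale t a) = Kscale (t * t) (Kdet \<alpha> a b c d)"
  by (simp add: Kdet_def Kmul_def Kscale_def algebra_simps)

lemma embH_in_Hgrp:
  "snd (Kdet \<alpha> a b c d) = 0 \<Longrightarrow> fst (Kdet \<alpha> a b c d) \<noteq> 0 \<Longrightarrow> embH \<alpha> a b c d \<in> Hgrp \<alpha>"
  unfolding Hgrp_def by blast

lemma embH_inv_in_Hgrp:
  assumes "snd (Kdet \<alpha> a b c d) = 0" "fst (Kdet \<alpha> a b c d) \<noteq> 0"
  shows "embH_inv \<alpha> a b c d \<in> Hgrp \<alpha>"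
  unfolding embH_inv_def
  by (rule embH_in_Hgrp) (simp_all only: Kdet_adjugate, use assms in \<open>simp_all add: Kscale_def\<close>)

lemma Hgrp_subset_GSp4:
  assumes "(\<alpha>::'a::field) \<noteq> 0"
  shows "Hgrp \<alpha> \<subseteq> GSp4"
proof
  fix x assume "x \<in> Hgrp \<alpha>"
  then obtain a b c d where x: "x = embH \<alpha> a b c d"
    and h: "snd (Kdet \<alpha> a b c d) = 0" "fst (Kdet \<alpha> a b c d) \<noteq> 0" unfolding Hgrp_def by auto
  have "det x \<noteq> 0"
    unfolding x
    by (rule right_inverse_imp_det_nonzero[OF embH_carrier _ embH_mult_inv[OF assms h]])
      (simp add: embH_inv_def)
  then show "x \<in> GSp4"
    unfolding GSp4_def using x h embH_symplectic[OF assms h(1)] by auto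
qed

lemma mem_setmult_Hgrp:
  fixes \<alpha> :: "'a::field"
  assumes "\<alpha> \<noteq> 0" and g: "g \<in> carrier_mat 4 4"
    and h: "snd (Kdet \<alpha> a b c d) = 0" "fst (Kdet \<alpha> a b c d) \<noteq> 0"
    and gh: "g * embH \<alpha> a b c d \<in> X"
  shows "g \<in> setmult X (Hgrp \<alpha>)"
proof -
  have "g = g * embH \<alpha> a b c d * embH_inv \<alpha> a b c d"
    using g embH_mult_inv[OF assms(1) h] unfolding embH_inv_def
    by (simp add: assoc_mult_mat[of _ 4 4 _ 4 _ 4])
  then show ?thesis
    using gh embH_inv_in_Hgrp[OF h] unfolding setmult_def by blast
qed

section \<open>The parabolic subgroups\<close>

lemma s2_carrier[simp]: "(s2::'a::field mat) \<in> carrier_mat 4 4"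
  unfolding s2_def using mat_of_rows_list_carrier by fastforce

lemma s2_index: "i < 4 \<Longrightarrow> j < 4 \<Longrightarrow> (s2::'a::field mat) $$ (i,j) =
    [[1,0,0,0],[0,0,0,1],[0,0,1,0],[0,-1,0,0]] ! i ! j"
  unfolding s2_def by (simp add: mat_of_rows_list_index)

lemma s2_dims[simp]: "dim_row (s2::'a::field mat) = 4" "dim_col (s2::'a::field mat) = 4"
  using s2_carrier by blast+

lemma transpose_s2_carrier[simp]: "transpose_mat (s2::'a::field mat) \<in> carrier_mat 4 4"
  by simp

lemma s2_mult_transpose: "(s2::'a::field mat) * transpose_mat s2 = 1\<^sub>m 4"
  by (rule mat4_eqI)
    (auto simp: mat4_mult_index[OF s2_carrier transpose_s2_carrier] s2_index mult_carrier_mat[of _ 4 4]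
      simp del: index_mult_mat)

lemma transpose_s2_mult: "transpose_mat (s2::'a::field mat) * s2 = 1\<^sub>m 4"
  by (rule mat4_eqI)
    (auto simp: mat4_mult_index[OF transpose_s2_carrier s2_carrier] s2_index mult_carrier_mat[of _ 4 4]
      simp del: index_mult_mat)

lemma s2_in_GSp4: "(s2::'a::field mat) \<in> GSp4"
  by (rule GSp4I[OF s2_carrier _ s2_mult_transpose, of 1]) (auto simp: s2_index Jmat_index)

lemma transpose_s2_in_GSp4: "transpose_mat (s2::'a::field mat) \<in> GSp4"
  by (rule GSp4I[OF _ _ transpose_s2_mult, of 1]) (auto simp: s2_index Jmat_index)

definition lower_left_zero :: "'a::field mat \<Rightarrow> bool" where
  "lower_left_zero g \<longleftrightarrow> g$$(2,0) = 0 \<and> g$$(3,0) = 0 \<and> g$$(2,1) = 0 \<and> g$$(3,1) = 0"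

lemma lower_left_zero_mult_vec_L0:
  assumes "(g::'a::field mat) \<in> carrier_mat 4 4" "lower_left_zero g" "v \<in> L0"
  shows "g *\<^sub>v v \<in> L0"
  using assms unfolding L0_def lower_left_zero_def
  by (simp add: mat4_mult_vec_index del: index_mult_mat_vec)

lemma GSp4_lower_right_det:
  assumes "(g::'a::field mat) \<in> GSp4" "lower_left_zero g"
  shows "g$$(2,2) * g$$(3,3) - g$$(2,3) * g$$(3,2) \<noteq> 0"
proof -
  obtain l where "l \<noteq> 0" and e: "\<And>i j. i < 4 \<Longrightarrow> j < 4 \<Longrightarrow>
     g$$(0,i) * g$$(2,j) + g$$(1,i) * g$$(3,j) - g$$(2,i) * g$$(0,j) - g$$(3,i) * g$$(1,j)
     = l * Jmat $$ (i,j)"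
    using GSp4E[OF assms(1)] by metis
  have "(g$$(0,0) * g$$(1,1) - g$$(0,1) * g$$(1,0)) * (g$$(2,2) * g$$(3,3) - g$$(2,3) * g$$(3,2))
     = (g$$(0,0) * g$$(2,2) + g$$(1,0) * g$$(3,2)) * (g$$(0,1) * g$$(2,3) + g$$(1,1) * g$$(3,3))
     - (g$$(0,0) * g$$(2,3) + g$$(1,0) * g$$(3,3)) * (g$$(0,1) * g$$(2,2) + g$$(1,1) * g$$(3,2))"
    by (simp add: algebra_simps)
  also have "\<dots> = l * l"
    using e[of 0 2] e[of 0 3] e[of 1 2] e[of 1 3] assms(2)
    by (simp add: lower_left_zero_def Jmat_index)
  finally have "(g$$(0,0) * g$$(1,1) - g$$(0,1) * g$$(1,0)) * (g$$(2,2) * g$$(3,3) - g$$(2,3) * g$$(3,2))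
      = l * l" .
  then show ?thesis using \<open>l \<noteq> 0\<close> by auto
qed

lemma SiegelP_iff: "g \<in> SiegelP \<longleftrightarrow> (g::'a::field mat) \<in> GSp4 \<and> lower_left_zero g"
proof
  assume P: "g \<in> SiegelP"
  then have G: "g \<in> GSp4" and im: "(\<lambda>v. g *\<^sub>v v) ` L0 = L0" unfolding SiegelP_def by auto
  have g: "g \<in> carrier_mat 4 4" using G unfolding GSp4_def by auto
  have "col g j \<in> L0" if "j < 2" for j
  proof -
    have "unit_vec 4 j \<in> (L0::'a vec set)" using that unfolding L0_def by auto
    then have "g *\<^sub>v unit_vec 4 j \<in> L0" using im by blast
    then show ?thesis using mult_unit_vec_eq_col[OF g, of j] that by simp
  qed
  from this[of 0] this[of 1] show "g \<in> GSp4 \<and> lower_left_zero g"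
    using G g unfolding L0_def lower_left_zero_def by auto
next
  assume "g \<in> GSp4 \<and> lower_left_zero g"
  then have G: "g \<in> GSp4" and z: "lower_left_zero g" by auto
  obtain l where g: "g \<in> carrier_mat 4 4" "det g \<noteq> 0" and "l \<noteq> 0"
    and e: "transpose_mat g * Jmat * g = l \<cdot>\<^sub>m Jmat" using GSp4E[OF G] by metis
  obtain m where m: "m \<in> carrier_mat 4 4" and gm: "g * m = 1\<^sub>m 4"
    using det_nonzero_right_inverse[OF g] by blast
  have zm: "lower_left_zero m"
    using GSp4_lower_rows_by_inverse[OF g(1) m gm e] z \<open>l \<noteq> 0\<close>
    unfolding lower_left_zero_def by auto
  have "L0 \<subseteq> (\<lambda>v. g *\<^sub>v v) ` L0"
  proof
    fix u :: "'a vec" assume u: "u \<in> L0"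
    then have "u = g *\<^sub>v (m *\<^sub>v u)"
      using g m gm unfolding L0_def by (simp add: assoc_mult_mat_vec[symmetric])
    then show "u \<in> (\<lambda>v. g *\<^sub>v v) ` L0"
      using lower_left_zero_mult_vec_L0[OF m zm u] by blast
  qed
  then show "g \<in> SiegelP"
    unfolding SiegelP_def using G lower_left_zero_mult_vec_L0[OF g(1) z] by blast
qed

lemma KlingenQ_intro:
  assumes G: "(g::'a::field mat) \<in> GSp4" and e: "col g 0 = unit_vec 4 0"
  shows "g \<in> KlingenQ"
proof -
  have g: "g \<in> carrier_mat 4 4" using G unfolding GSp4_def by auto
  have "g *\<^sub>v (c \<cdot>\<^sub>v unit_vec 4 0) = c \<cdot>\<^sub>v unit_vec 4 0" for c :: 'a
    using mult_mat_vec[OF g unit_vec_carrier] mult_unit_vec_eq_col[OF g] e by simp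
  then have "(\<lambda>v. g *\<^sub>v v) ` line_e1 = line_e1"
    unfolding line_e1_def by (auto simp: image_iff) metis
  then show ?thesis unfolding KlingenQ_def using G by auto
qed

section \<open>The Siegel invariant\<close>

text \<open>A Pluecker-type coordinate of the plane spanned by the last two rows of \<open>x\<close>.\<close>
definition siegel_invariant :: "'a::field \<Rightarrow> 'a mat \<Rightarrow> 'a" where
  "siegel_invariant \<alpha> x =
     - x$$(2,2) * x$$(3,1) - \<alpha> * x$$(2,3) * x$$(3,0) + \<alpha> * x$$(3,3) * x$$(2,0) + x$$(3,2) * x$$(2,1)"

lemma siegel_invariant_mult_embH:
  fixes \<alpha> :: "'a::field"
  assumes x: "x \<in> carrier_mat 4 4" and "\<alpha> \<noteq> 0" and h: "snd (Kdet \<alpha> a b c d) = 0"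
  shows "siegel_invariant \<alpha> (x * embH \<alpha> a b c d) = fst (Kdet \<alpha> a b c d) * siegel_invariant \<alpha> x"
proof -
  have "siegel_invariant \<alpha> (x * embH \<alpha> a b c d) = fst (Kdet \<alpha> a b c d) * siegel_invariant \<alpha> x
     + \<alpha> * snd (Kdet \<alpha> a b c d) *
       (x$$(2,0) * x$$(3,2) + x$$(2,1) * x$$(3,3) - x$$(2,2) * x$$(3,0) - x$$(2,3) * x$$(3,1))"
    unfolding siegel_invariant_def using \<open>\<alpha> \<noteq> 0\<close>
    by (simp add: mat4_mult_index[OF x embH_carrier] embH_index Kdet_def Kmul_def field_simps
        del: index_mult_mat)
  then show ?thesis using h by simp
qed

lemma siegel_invariant_lower_left_zero_mult:
  assumes p: "(p::'a::field mat) \<in> carrier_mat 4 4" and x: "x \<in> carrier_mat 4 4"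
    and "lower_left_zero p"
  shows "siegel_invariant \<alpha> (p * x) = (p$$(2,2) * p$$(3,3) - p$$(2,3) * p$$(3,2)) * siegel_invariant \<alpha> x"
  using assms(3) unfolding siegel_invariant_def lower_left_zero_def
  by (simp add: mat4_mult_index[OF p x] algebra_simps del: index_mult_mat)

lemma siegel_invariant_lower_left_zero: "lower_left_zero p \<Longrightarrow> siegel_invariant \<alpha> p = 0"
  unfolding siegel_invariant_def lower_left_zero_def by simp

lemma siegel_invariant_s2: "siegel_invariant \<alpha> (s2::'a::field mat) = 1"
  unfolding siegel_invariant_def by (simp add: s2_index)

lemma siegel_invariant_SiegelP_Hgrp:
  fixes \<alpha> :: "'a::field"
  assumes "\<alpha> \<noteq> 0" "x \<in> setmult SiegelP (Hgrp \<alpha>)"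
  shows "siegel_invariant \<alpha> x = 0"
proof -
  obtain p a b c d where p: "p \<in> SiegelP" and x: "x = p * embH \<alpha> a b c d"
    and h: "snd (Kdet \<alpha> a b c d) = 0"
    using assms(2) unfolding setmult_def Hgrp_def by blast
  then have pc: "p \<in> carrier_mat 4 4" and "lower_left_zero p"
    unfolding SiegelP_iff GSp4_def by auto
  then show ?thesis
    unfolding x siegel_invariant_mult_embH[OF pc assms(1) h]
    by (simp add: siegel_invariant_lower_left_zero)
qed

lemma siegel_invariant_SiegelP_s2_Hgrp:
  fixes \<alpha> :: "'a::field"
  assumes "\<alpha> \<noteq> 0" "x \<in> setmult (setmult SiegelP {s2}) (Hgrp \<alpha>)"
  shows "siegel_invariant \<alpha> x \<noteq> 0"
proof -
  obtain p a b c d where p: "p \<in> SiegelP" and x: "x = p * s2 * embH \<alpha> a b c d"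
    and h: "snd (Kdet \<alpha> a b c d) = 0" "fst (Kdet \<alpha> a b c d) \<noteq> 0"
    using assms(2) unfolding setmult_def Hgrp_def by blast
  then have pc: "p \<in> carrier_mat 4 4" and z: "lower_left_zero p"
    and "p$$(2,2) * p$$(3,3) - p$$(2,3) * p$$(3,2) \<noteq> 0"
    using GSp4_lower_right_det unfolding SiegelP_iff GSp4_def by auto
  moreover have ps: "p * s2 \<in> carrier_mat 4 4" using pc by simp
  ultimately show ?thesis
    unfolding x siegel_invariant_mult_embH[OF ps assms(1) h(1)]
      siegel_invariant_lower_left_zero_mult[OF pc s2_carrier z] siegel_invariant_s2
    using h(2) by simp
qed

lemma siegel_invariant_by_inverse:
  fixes g :: "'a::field mat"
  assumes "g \<in> carrier_mat 4 4" "m \<in> carrier_mat 4 4" "g * m = 1\<^sub>m 4"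
    and "transpose_mat g * Jmat * g = l \<cdot>\<^sub>m Jmat"
  shows "siegel_invariant \<alpha> g = l * l *
    (m$$(0,0) * m$$(3,1) + \<alpha> * m$$(1,0) * m$$(2,1) - \<alpha> * m$$(1,1) * m$$(2,0) - m$$(0,1) * m$$(3,0))"
  unfolding siegel_invariant_def GSp4_lower_rows_by_inverse[OF assms] by (simp add: algebra_simps)

section \<open>Double coset decompositions\<close>

lemma norm_form_nonzero:
  fixes \<alpha> x y :: "'a::field"
  assumes "\<not> (\<exists>z. z * z = \<alpha>)" "x \<noteq> 0 \<or> y \<noteq> 0"
  shows "x * x - \<alpha> * y * y \<noteq> 0"
proof
  assume "x * x - \<alpha> * y * y = 0"
  then have "y \<noteq> 0" and "(x / y) * (x / y) = \<alpha>"
    using assms(2) by (auto simp: field_simps)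
  with assms(1) show False by blast
qed

lemma exists_Kdet_in_units:
  fixes \<alpha> :: "'a::field"
  assumes "\<not> (\<exists>z. z * z = \<alpha>)" "a \<noteq> (0,0) \<or> c \<noteq> (0,0)"
  obtains b d where "snd (Kdet \<alpha> a b c d) = 0" "fst (Kdet \<alpha> a b c d) \<noteq> 0"
proof (cases "a = (0,0)")
  case False
  then have "fst a * fst a - \<alpha> * snd a * snd a \<noteq> 0"
    using norm_form_nonzero[OF assms(1)] by (metis prod.collapse)
  then show ?thesis
    using that[of "(0,0)" "(fst a, - snd a)"] by (simp add: Kdet_def Kmul_def algebra_simps)
next
  case True
  then have "fst c * fst c - \<alpha> * snd c * snd c \<noteq> 0"
    using assms(2) norm_form_nonzero[OF assms(1)] by (metis prod.collapse)
  then show ?thesis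
    using True that[of "(- fst c, snd c)" "(0,0)"] by (simp add: Kdet_def Kmul_def algebra_simps)
qed

text \<open>\<open>H\<close> acts transitively on the nonzero vectors of \<open>k\<^sup>4 = K\<^sup>2\<close>.\<close>
lemma exists_Hgrp_fixing_e1:
  fixes \<alpha> :: "'a::field"
  assumes "\<alpha> \<noteq> 0" "\<not> (\<exists>z. z * z = \<alpha>)"
    and g: "g \<in> carrier_mat 4 4" and m: "m \<in> carrier_mat 4 4" and gm: "g * m = 1\<^sub>m 4"
  obtains b d where "snd (Kdet \<alpha> (m$$(0,0), m$$(1,0)) b (m$$(2,0), m$$(3,0) / \<alpha>) d) = 0"
    "fst (Kdet \<alpha> (m$$(0,0), m$$(1,0)) b (m$$(2,0), m$$(3,0) / \<alpha>) d) \<noteq> 0"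
    "col (g * embH \<alpha> (m$$(0,0), m$$(1,0)) b (m$$(2,0), m$$(3,0) / \<alpha>) d) 0 = unit_vec 4 0"
proof -
  have gm0: "g *\<^sub>v col m 0 = unit_vec 4 0"
    using col_mult2[OF g m, of 0] gm by simp
  have "col m 0 \<noteq> 0\<^sub>v 4"
  proof
    assume "col m 0 = 0\<^sub>v 4"
    then have "(unit_vec 4 0 :: 'a vec) $ 0 = (g *\<^sub>v 0\<^sub>v 4) $ 0" using gm0 by simp
    also have "\<dots> = 0" using g by (simp add: scalar_prod_def)
    finally show False by simp
  qed
  moreover have "col m 0 = 0\<^sub>v 4" if "m$$(0,0) = 0" "m$$(1,0) = 0" "m$$(2,0) = 0" "m$$(3,0) = 0"
    by (rule vec4_eqI) (use m that in auto)
  ultimately have "(m$$(0,0), m$$(1,0)) \<noteq> (0,0) \<or> (m$$(2,0), m$$(3,0) / \<alpha>) \<noteq> (0,0)"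
    using assms(1) by auto
  then obtain b d where h: "snd (Kdet \<alpha> (m$$(0,0), m$$(1,0)) b (m$$(2,0), m$$(3,0) / \<alpha>) d) = 0"
    "fst (Kdet \<alpha> (m$$(0,0), m$$(1,0)) b (m$$(2,0), m$$(3,0) / \<alpha>) d) \<noteq> 0"
    using exists_Kdet_in_units[OF assms(2)] by blast
  have "col (embH \<alpha> (m$$(0,0), m$$(1,0)) b (m$$(2,0), m$$(3,0) / \<alpha>) d) 0 = col m 0"
    by (rule vec4_eqI) (use m assms(1) in \<open>auto simp: embH_index\<close>)
  then show ?thesis
    using that[OF h] col_mult2[OF g embH_carrier, of 0] gm0 by simp
qed

lemma col_mult_transpose_s2:
  assumes A: "(A::'a::field mat) \<in> carrier_mat 4 4"
  shows "col (A * transpose_mat s2) 0 = col A 0" "col (A * transpose_mat s2) 1 = col A 3"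
proof -
  have "A * transpose_mat s2 \<in> carrier_mat 4 4" using A by simp
  note dims = carrier_matD[OF this] carrier_matD[OF A]
  show "col (A * transpose_mat s2) 0 = col A 0" "col (A * transpose_mat s2) 1 = col A 3"
    by (rule vec4_eqI; use dims in \<open>auto simp: mat4_mult_index[OF A transpose_s2_carrier] s2_index
        simp del: index_mult_mat\<close>)+
qed

lemma GSp4_subset_KlingenQ_Hgrp:
  fixes \<alpha> :: "'a::field"
  assumes "\<alpha> \<noteq> 0" "\<not> (\<exists>z. z * z = \<alpha>)"
  shows "GSp4 \<subseteq> setmult KlingenQ (Hgrp \<alpha>)"
proof
  fix g :: "'a mat" assume G: "g \<in> GSp4"
  then obtain g: "g \<in> carrier_mat 4 4" "det g \<noteq> 0" using GSp4E by metis
  obtain m where m: "m \<in> carrier_mat 4 4" and gm: "g * m = 1\<^sub>m 4"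
    using det_nonzero_right_inverse[OF g] by blast
  obtain b d where h: "snd (Kdet \<alpha> (m$$(0,0), m$$(1,0)) b (m$$(2,0), m$$(3,0) / \<alpha>) d) = 0"
    "fst (Kdet \<alpha> (m$$(0,0), m$$(1,0)) b (m$$(2,0), m$$(3,0) / \<alpha>) d) \<noteq> 0"
    and e1: "col (g * embH \<alpha> (m$$(0,0), m$$(1,0)) b (m$$(2,0), m$$(3,0) / \<alpha>) d) 0 = unit_vec 4 0"
    using exists_Hgrp_fixing_e1[OF assms g(1) m gm] by blast
  have "embH \<alpha> (m$$(0,0), m$$(1,0)) b (m$$(2,0), m$$(3,0) / \<alpha>) d \<in> GSp4"
    using Hgrp_subset_GSp4[OF assms(1)] embH_in_Hgrp[OF h] by blast
  then have "g * embH \<alpha> (m$$(0,0), m$$(1,0)) b (m$$(2,0), m$$(3,0) / \<alpha>) d \<in> KlingenQ"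
    using KlingenQ_intro[OF GSp4_mult[OF G] e1] by blast
  then show "g \<in> setmult KlingenQ (Hgrp \<alpha>)" by (rule mem_setmult_Hgrp[OF assms(1) g(1) h])
qed

lemma siegel_invariant_zero_imp_SiegelP_Hgrp:
  fixes \<alpha> :: "'a::field"
  assumes "\<alpha> \<noteq> 0" "\<not> (\<exists>z. z * z = \<alpha>)"
    and G: "g \<in> GSp4" and D: "siegel_invariant \<alpha> g = 0"
  shows "g \<in> setmult SiegelP (Hgrp \<alpha>)"
proof -
  obtain l where g: "g \<in> carrier_mat 4 4" "det g \<noteq> 0" and "l \<noteq> 0"
    and e: "transpose_mat g * Jmat * g = l \<cdot>\<^sub>m Jmat" using GSp4E[OF G] by metis
  obtain m where m: "m \<in> carrier_mat 4 4" and gm: "g * m = 1\<^sub>m 4"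
    using det_nonzero_right_inverse[OF g] by blast
  note rows = GSp4_lower_rows_by_inverse[OF g(1) m gm e]
  have F: "m$$(0,0) * m$$(3,1) + \<alpha> * m$$(1,0) * m$$(2,1) - \<alpha> * m$$(1,1) * m$$(2,0) - m$$(0,1) * m$$(3,0) = 0"
    using siegel_invariant_by_inverse[OF g(1) m gm e, of \<alpha>] D \<open>l \<noteq> 0\<close> by simp
  obtain b d where h: "snd (Kdet \<alpha> (m$$(0,0), m$$(1,0)) b (m$$(2,0), m$$(3,0) / \<alpha>) d) = 0"
    "fst (Kdet \<alpha> (m$$(0,0), m$$(1,0)) b (m$$(2,0), m$$(3,0) / \<alpha>) d) \<noteq> 0"
    and e1: "col (g * embH \<alpha> (m$$(0,0), m$$(1,0)) b (m$$(2,0), m$$(3,0) / \<alpha>) d) 0 = unit_vec 4 0"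
    using exists_Hgrp_fixing_e1[OF assms(1,2) g(1) m gm] by blast
  define q where "q = g * embH \<alpha> (m$$(0,0), m$$(1,0)) b (m$$(2,0), m$$(3,0) / \<alpha>) d"
  have qc: "q \<in> carrier_mat 4 4" unfolding q_def using g by simp
  have "q$$(2,0) = 0" "q$$(3,0) = 0"
    using arg_cong[OF e1, of "\<lambda>v. v $ 2"] arg_cong[OF e1, of "\<lambda>v. v $ 3"] qc
    unfolding q_def[symmetric] by simp_all
  moreover have "q$$(2,1) = 0" "q$$(3,1) = - l * (m$$(0,0) * m$$(3,1) + \<alpha> * m$$(1,0) * m$$(2,1)
      - \<alpha> * m$$(1,1) * m$$(2,0) - m$$(0,1) * m$$(3,0))"
    unfolding q_def using \<open>\<alpha> \<noteq> 0\<close>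
    by (simp_all add: mat4_mult_index[OF g(1) embH_carrier] embH_index rows rows[simplified] field_simps
        del: index_mult_mat)
  moreover have "q \<in> GSp4"
    unfolding q_def using GSp4_mult[OF G] Hgrp_subset_GSp4[OF assms(1)] embH_in_Hgrp[OF h] by blast
  ultimately have "q \<in> SiegelP" using F unfolding SiegelP_iff lower_left_zero_def by simp
  then show ?thesis unfolding q_def by (rule mem_setmult_Hgrp[OF assms(1) g(1) h])
qed

lemma mult_in_SiegelP_s2:
  assumes G: "(g::'a::field mat) \<in> GSp4" and h: "h \<in> GSp4"
    and m: "m \<in> carrier_mat 4 4" and gm: "g * m = 1\<^sub>m 4"
    and cols: "col h 0 = col m 0" "col h 3 = col m 1"
  shows "g * h \<in> setmult SiegelP {s2}"
proof -
  have g: "g \<in> carrier_mat 4 4" and hc: "h \<in> carrier_mat 4 4" using G h unfolding GSp4_def by auto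
  then have k: "h * transpose_mat s2 \<in> carrier_mat 4 4" by simp
  define p where "p = g * (h * transpose_mat s2)"
  have pc: "p \<in> carrier_mat 4 4" unfolding p_def using g k by simp
  have "col p 0 = unit_vec 4 0" "col p 1 = unit_vec 4 1"
    unfolding p_def using col_mult2[OF g k] col_mult2[OF g m] gm col_mult_transpose_s2[OF hc] cols
    by simp_all
  then have "p$$(i,j) = unit_vec 4 j $ i" if "i < 4" "j < 2" for i j
    using that pc by (auto simp: less_2_cases_iff dest: arg_cong[of _ _ "\<lambda>v. v $ i"])
  then have "lower_left_zero p" unfolding lower_left_zero_def by simp
  moreover have "p \<in> GSp4"
    unfolding p_def using G h transpose_s2_in_GSp4 by (blast intro: GSp4_mult)
  ultimately have "p \<in> SiegelP" by (simp add: SiegelP_iff)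
  moreover have "g * h = p * s2"
    unfolding p_def using g hc by (simp add: assoc_mult_mat[of _ 4 4 _ 4 _ 4] transpose_s2_mult)
  ultimately show ?thesis unfolding setmult_def by blast
qed

lemma siegel_invariant_nonzero_imp_SiegelP_s2_Hgrp:
  fixes \<alpha> :: "'a::field"
  assumes "\<alpha> \<noteq> 0" and G: "g \<in> GSp4" and D: "siegel_invariant \<alpha> g \<noteq> 0"
  shows "g \<in> setmult (setmult SiegelP {s2}) (Hgrp \<alpha>)"
proof -
  obtain l where g: "g \<in> carrier_mat 4 4" "det g \<noteq> 0" and "l \<noteq> 0"
    and e: "transpose_mat g * Jmat * g = l \<cdot>\<^sub>m Jmat" using GSp4E[OF G] by metis
  obtain m where m: "m \<in> carrier_mat 4 4" and gm: "g * m = 1\<^sub>m 4"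
    using det_nonzero_right_inverse[OF g] by blast
  note rows = GSp4_lower_rows_by_inverse[OF g(1) m gm e]
  define a where "a = (m$$(0,0), m$$(1,0))"
  define b where "b = (\<alpha> * m$$(1,1), m$$(0,1))"
  define c where "c = (m$$(2,0), m$$(3,0) / \<alpha>)"
  define d where "d = (m$$(3,1), m$$(2,1))"
  have "(g * m)$$(2,1) = l * (m$$(0,0) * m$$(2,1) + m$$(1,0) * m$$(3,1) - m$$(2,0) * m$$(0,1) - m$$(3,0) * m$$(1,1))"
    by (simp add: mat4_mult_index[OF g(1) m] rows rows[simplified] algebra_simps del: index_mult_mat)
  then have "m$$(0,0) * m$$(2,1) + m$$(1,0) * m$$(3,1) - m$$(2,0) * m$$(0,1) - m$$(3,0) * m$$(1,1) = 0"
    using gm \<open>l \<noteq> 0\<close> by simp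
  then have hs: "snd (Kdet \<alpha> a b c d) = 0"
    using \<open>\<alpha> \<noteq> 0\<close> unfolding a_def b_def c_def d_def by (simp add: Kdet_def Kmul_def field_simps)
  have "m$$(0,0) * m$$(3,1) + \<alpha> * m$$(1,0) * m$$(2,1) - \<alpha> * m$$(1,1) * m$$(2,0) - m$$(0,1) * m$$(3,0) \<noteq> 0"
    using siegel_invariant_by_inverse[OF g(1) m gm e, of \<alpha>] D by (metis mult_zero_right)
  then have hf: "fst (Kdet \<alpha> a b c d) \<noteq> 0"
    using \<open>\<alpha> \<noteq> 0\<close> unfolding a_def b_def c_def d_def by (simp add: Kdet_def Kmul_def field_simps)
  have "col (embH \<alpha> a b c d) 0 = col m 0" "col (embH \<alpha> a b c d) 3 = col m 1"
    unfolding a_def b_def c_def d_def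
    by (rule vec4_eqI; use m \<open>\<alpha> \<noteq> 0\<close> in \<open>auto simp: embH_index\<close>)+
  then have "g * embH \<alpha> a b c d \<in> setmult SiegelP {s2}"
    using mult_in_SiegelP_s2[OF G _ m gm] Hgrp_subset_GSp4[OF assms(1)] embH_in_Hgrp[OF hs hf]
    by blast
  then show ?thesis by (rule mem_setmult_Hgrp[OF assms(1) g(1) hs hf])
qed

theorem lemma2p3:
  fixes \<alpha> :: "'a::field"
  assumes "nonarch_local_field TYPE('a)"
    and "(2::'a) \<noteq> 0"
    and "\<alpha> \<noteq> 0" and "\<not> (\<exists>x::'a. x * x = \<alpha>)"
  shows "GSp4 = setmult KlingenQ (Hgrp \<alpha>)
       \<and> GSp4 = setmult SiegelP (Hgrp \<alpha>) \<union> setmult (setmult SiegelP {s2}) (Hgrp \<alpha>)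
       \<and> setmult SiegelP (Hgrp \<alpha>) \<inter> setmult (setmult SiegelP {s2}) (Hgrp \<alpha>) = {}"
proof -
  have H: "Hgrp \<alpha> \<subseteq> GSp4" by (rule Hgrp_subset_GSp4[OF assms(3)])
  have P: "SiegelP \<subseteq> GSp4" and Q: "KlingenQ \<subseteq> GSp4" by (auto simp: SiegelP_iff KlingenQ_def)
  then have Ps2: "setmult SiegelP {s2} \<subseteq> GSp4"
    using setmult_subset_GSp4 s2_in_GSp4 by blast
  have "GSp4 \<subseteq> setmult SiegelP (Hgrp \<alpha>) \<union> setmult (setmult SiegelP {s2}) (Hgrp \<alpha>)"
    using siegel_invariant_zero_imp_SiegelP_Hgrp[OF assms(3,4)]
      siegel_invariant_nonzero_imp_SiegelP_s2_Hgrp[OF assms(3)] by blast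
  moreover have "setmult SiegelP (Hgrp \<alpha>) \<inter> setmult (setmult SiegelP {s2}) (Hgrp \<alpha>) = {}"
    using siegel_invariant_SiegelP_Hgrp[OF assms(3)] siegel_invariant_SiegelP_s2_Hgrp[OF assms(3)]
    by blast
  ultimately show ?thesis
    using GSp4_subset_KlingenQ_Hgrp[OF assms(3,4)] setmult_subset_GSp4[OF Q H]
      setmult_subset_GSp4[OF P H] setmult_subset_GSp4[OF Ps2 H] by blast
qed

end
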